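(* For all $n\in\mathbb{N}$ the bistatistic $(\operatorname{veh}',\operatorname{SIVEH})$ is Euler–Mahonian on $\mathfrak{S}_n$, i.e. $$\sum_{\pi\in\mathfrak{S}_n}s^{\operatorname{veh}'(\pi)}q^{\operatorname{SIVEH}(\pi)}=\sum_{\pi\in\mathfrak{S}_n}s^{\operatorname{des}(\pi)}q^{\operatorname{MAJ}(\pi)}.$$
   Context: For $\pi=a_1\cdots a_n\in\mathfrak{S}_n$: $\operatorname{Des}(\pi)=\{i\in[n-1]:a_i>a_{i+1}\}$, $\operatorname{des}(\pi)=|\operatorname{Des}(\pi)|$, $\operatorname{MAJ}(\pi)=\sum_{i\in\operatorname{Des}(\pi)}i$. The increasing unordered tree $T'(\pi)$ has root labeled $0$: if $b$ is a right-to-left minimum of $\pi$ then $b$ is a child of the root; otherwise $b$ is a child of the leftmost letter $a$ to the right of $b$ with $a<b$. $\operatorname{veh}'(\pi)$ is the number of non-root vertices of even height in $T'(\pi)$ (root at height $0$), $\operatorname{EV}(\pi)$ is the set of indices $i$ such that $a_i$ has even height, and $\operatorname{SIVEH}(\pi)=\sum_{i\in\operatorname{EV}(\pi)}i$. *)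

theory Defs
  imports Main "HOL-Combinatorics.Multiset_Permutations"
begin

text \<open>Permutations of [n] are words (lists) a_1 ... a_n; list index k corresponds to position k+1.\<close>

definition Des :: "nat list \<Rightarrow> nat set" where
  "Des w = {i \<in> {1..<length w}. w ! (i - 1) > w ! i}"

definition des :: "nat list \<Rightarrow> nat" where
  "des w = card (Des w)"

definition MAJ :: "nat list \<Rightarrow> nat" where
  "MAJ w = (\<Sum>i\<in>Des w. i)"

text \<open>ht (b # ys): height in T'(pi) of the letter b, whose right part is ys.
  If b is a right-to-left minimum its parent is the root (height 1); otherwise its
  parent is the leftmost letter a of ys with a < b.\<close>
function ht :: "nat list \<Rightarrow> nat" where
  "ht [] = 0"
| "ht (b # ys) =
     (if \<exists>a\<in>set ys. a < b
      then Suc (ht (drop (LEAST j. j < length ys \<and> ys ! j < b) ys))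
      else 1)"
  by pat_completeness auto
termination
  by (relation "measure length") auto

definition height_at :: "nat list \<Rightarrow> nat \<Rightarrow> nat" where
  "height_at w i = ht (drop (i - 1) w)"

definition EV :: "nat list \<Rightarrow> nat set" where
  "EV w = {i \<in> {1..length w}. even (height_at w i)}"

definition veh' :: "nat list \<Rightarrow> nat" where
  "veh' w = card (EV w)"

definition SIVEH :: "nat list \<Rightarrow> nat" where
  "SIVEH w = (\<Sum>i\<in>EV w. i)"

end

theory Submission
  imports Defs
begin

(* Every permutation of [m+1] is uniquely cons_shift r u: the first letter r followed by a
   permutation u of [m] whose letters >= r are shifted up by one. This keeps all inversions, so
   both Des and EV of cons_shift r u consist of the indices of u shifted by one, plus possibly the
   index 1 ("r is marked"); hence s^card q^sum of cons_shift r u is that of u taken at (s q, q),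
   times s q if r is marked. Refine by a state: the first letter for Des, and for EV the number
   of j such that j u has a first letter of odd height. In both cases, if u is in state j, the
   insertions r = 1..m+1 reach each of the states 1..j once unmarked and each of j+1..m+1 once
   marked. So both refined generating functions obey one and the same recursion. *)

abbreviation perms :: "nat \<Rightarrow> nat list set" where
  "perms m \<equiv> permutations_of_set {1..m}"

definition shift_from :: "nat \<Rightarrow> nat \<Rightarrow> nat" where
  "shift_from r x = (if r \<le> x then Suc x else x)"

definition cons_shift :: "nat \<Rightarrow> nat list \<Rightarrow> nat list" where
  "cons_shift r u = r # map (shift_from r) u"

lemma length_cons_shift [simp]: "length (cons_shift r u) = Suc (length u)"
  by (simp add: cons_shift_def)

lemma strict_mono_shift_from: "strict_mono (shift_from r)"
  by (rule strict_monoI) (auto simp: shift_from_def)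

lemma shift_from_image:
  assumes "r \<in> {1..Suc m}"
  shows "shift_from r ` {1..m} = {1..Suc m} - {r}"
proof
  show "shift_from r ` {1..m} \<subseteq> {1..Suc m} - {r}"
    by (auto simp: shift_from_def)
  show "{1..Suc m} - {r} \<subseteq> shift_from r ` {1..m}"
  proof
    fix y assume y: "y \<in> {1..Suc m} - {r}"
    show "y \<in> shift_from r ` {1..m}"
    proof (cases "y < r")
      case True
      then have "y = shift_from r y" "y \<in> {1..m}" using y assms by (auto simp: shift_from_def)
      then show ?thesis by blast
    next
      case False
      then have "y = shift_from r (y - 1)" "y - 1 \<in> {1..m}" using y assms by (auto simp: shift_from_def)
      then show ?thesis by blast
    qed
  qed
qed

lemma cons_shift_in_perms:
  assumes "u \<in> perms m" and "r \<in> {1..Suc m}"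
  shows "cons_shift r u \<in> perms (Suc m)"
proof
  have u: "set u = {1..m}" "distinct u" using permutations_of_setD[OF assms(1)] by auto
  then show "set (cons_shift r u) = {1..Suc m}"
    using shift_from_image[OF assms(2)] assms(2) by (auto simp: cons_shift_def)
  show "distinct (cons_shift r u)"
    using u strict_mono_imp_inj_on[OF strict_mono_shift_from]
    by (auto simp: cons_shift_def distinct_map shift_from_def inj_on_def)
qed

lemma inj_cons_shift: "inj (\<lambda>(r, u). cons_shift r u)"
proof (rule injI, clarify)
  fix r u r' u' assume "cons_shift r u = cons_shift r' u'"
  then have "r = r'" "map (shift_from r) u = map (shift_from r) u'" by (auto simp: cons_shift_def)
  then show "r = r' \<and> u = u'"
    using strict_mono_imp_inj_on[OF strict_mono_shift_from] by (auto dest: inj_map_eq_map)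
qed

lemma perms_Suc: "perms (Suc m) = (\<lambda>(r, u). cons_shift r u) ` ({1..Suc m} \<times> perms m)"
proof (rule card_subset_eq[symmetric])
  show "(\<lambda>(r, u). cons_shift r u) ` ({1..Suc m} \<times> perms m) \<subseteq> perms (Suc m)"
    using cons_shift_in_perms by auto
  have "card ((\<lambda>(r, u). cons_shift r u) ` ({1..Suc m} \<times> perms m)) = Suc m * fact m"
    by (simp add: card_image[OF inj_on_subset[OF inj_cons_shift]] card_cartesian_product)
  then show "card ((\<lambda>(r, u). cons_shift r u) ` ({1..Suc m} \<times> perms m)) = card (perms (Suc m))"
    by simp
qed simp

lemma sum_perms_Suc:
  "(\<Sum>w\<in>perms (Suc m). f w) = (\<Sum>u\<in>perms m. \<Sum>r\<in>{1..Suc m}. f (cons_shift r u))"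
proof -
  have "(\<Sum>w\<in>perms (Suc m). f w) = (\<Sum>(r, u)\<in>{1..Suc m} \<times> perms m. f (cons_shift r u))"
    unfolding perms_Suc
    by (subst sum.reindex[OF inj_on_subset[OF inj_cons_shift]]) (auto simp: case_prod_beta)
  also have "\<dots> = (\<Sum>r\<in>{1..Suc m}. \<Sum>u\<in>perms m. f (cons_shift r u))"
    by (rule sum.cartesian_product[symmetric])
  also have "\<dots> = (\<Sum>u\<in>perms m. \<Sum>r\<in>{1..Suc m}. f (cons_shift r u))"
    by (rule sum.swap)
  finally show ?thesis .
qed

definition same_inversions :: "nat list \<Rightarrow> nat list \<Rightarrow> bool" where
  "same_inversions xs ys \<longleftrightarrow> length xs = length ys \<and>
     (\<forall>i j. i < j \<and> j < length xs \<longrightarrow> (xs ! j < xs ! i \<longleftrightarrow> ys ! j < ys ! i))"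

lemma same_inversions_Cons:
  "same_inversions (x # xs) (y # ys) \<longleftrightarrow>
     same_inversions xs ys \<and> (\<forall>k < length xs. xs ! k < x \<longleftrightarrow> ys ! k < y)"
proof
  assume *: "same_inversions (x # xs) (y # ys)"
  have "xs ! k < x \<longleftrightarrow> ys ! k < y" if "k < length xs" for k
    using * that unfolding same_inversions_def
    by (metis nth_Cons_0 nth_Cons_Suc zero_less_Suc length_Cons Suc_mono)
  moreover have "same_inversions xs ys"
    using * unfolding same_inversions_def by (metis nth_Cons_Suc length_Cons Suc_mono Suc_inject)
  ultimately show "same_inversions xs ys \<and> (\<forall>k < length xs. xs ! k < x \<longleftrightarrow> ys ! k < y)" by blast
next
  assume *: "same_inversions xs ys \<and> (\<forall>k < length xs. xs ! k < x \<longleftrightarrow> ys ! k < y)"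
  show "same_inversions (x # xs) (y # ys)"
    unfolding same_inversions_def
  proof (intro conjI allI impI)
    show "length (x # xs) = length (y # ys)" using * by (simp add: same_inversions_def)
    fix i j assume "i < j \<and> j < length (x # xs)"
    then obtain j' where "j = Suc j'" "j' < length xs" by (cases j) auto
    then show "(x # xs) ! j < (x # xs) ! i \<longleftrightarrow> (y # ys) ! j < (y # ys) ! i"
      using * \<open>i < j \<and> _\<close> unfolding same_inversions_def by (cases i) auto
  qed
qed

lemma same_inversions_drop:
  "same_inversions xs ys \<Longrightarrow> same_inversions (drop k xs) (drop k ys)"
  unfolding same_inversions_def by auto

lemma same_inversions_map:
  assumes "strict_mono h"
  shows "same_inversions (map h xs) xs"
  unfolding same_inversions_def by (simp add: strict_mono_less[OF assms])

lemma ht_same_inversions: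
  "same_inversions xs ys \<Longrightarrow> ht xs = ht ys"
proof (induction xs arbitrary: ys rule: ht.induct)
  case 1
  then show ?case by (simp add: same_inversions_def)
next
  case (2 b xs)
  obtain c ys' where ys: "ys = c # ys'"
    using "2.prems" by (cases ys) (auto simp: same_inversions_def)
  have tail: "same_inversions xs ys'" and head: "\<forall>k < length xs. xs ! k < b \<longleftrightarrow> ys' ! k < c"
    using "2.prems" unfolding ys same_inversions_Cons by auto
  have len: "length ys' = length xs" using tail by (simp add: same_inversions_def)
  have smaller: "(\<exists>a\<in>set xs. a < b) \<longleftrightarrow> (\<exists>a\<in>set ys'. a < c)"
    using head len by (simp add: Bex_set_list_ex list_ex_length) blast
  have least: "(LEAST j. j < length xs \<and> xs ! j < b) = (LEAST j. j < length ys' \<and> ys' ! j < c)"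
    using head len by metis
  show ?case
    using "2.IH"[OF _ same_inversions_drop[OF tail]] smaller least by (simp add: ys)
qed

lemma ht_Cons_Cons_less: "b < v \<Longrightarrow> ht (v # b # u) = Suc (ht (b # u))"
proof -
  assume "b < v"
  then have "(LEAST j. j < length (b # u) \<and> (b # u) ! j < v) = 0"
    by (intro Least_equality) auto
  with \<open>b < v\<close> show ?thesis by simp
qed

lemma ht_Cons_Cons_not_less: "\<not> b < v \<Longrightarrow> ht (v # b # u) = ht (v # u)"
proof (cases "\<exists>a\<in>set u. a < v")
  case True
  assume "\<not> b < v"
  from True obtain i where i: "i < length u" "u ! i < v" by (auto simp: in_set_conv_nth)
  have "(LEAST j. j < length (b # u) \<and> (b # u) ! j < v) = Suc (LEAST j. j < length u \<and> u ! j < v)"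
    by (rule Least_Suc2[where n="Suc i" and m=i]) (use i \<open>\<not> b < v\<close> in auto)
  with True \<open>\<not> b < v\<close> show ?thesis by simp
qed auto

declare ht.simps(2) [simp del]

lemma same_inversions_cons_shift: "same_inversions (cons_shift r u) (r # u)"
  unfolding cons_shift_def same_inversions_Cons
  by (simp add: same_inversions_map[OF strict_mono_shift_from]) (simp add: shift_from_def)

lemma ht_Cons_cons_shift_le: "j \<le> r \<Longrightarrow> ht (j # cons_shift r u) = ht (j # u)"
proof -
  assume "j \<le> r"
  then have "ht (j # cons_shift r u) = ht (j # map (shift_from r) u)"
    unfolding cons_shift_def by (simp add: ht_Cons_Cons_not_less)
  also have "\<dots> = ht (j # u)"
    using \<open>j \<le> r\<close> by (intro ht_same_inversions)
      (simp add: same_inversions_Cons same_inversions_map[OF strict_mono_shift_from] shift_from_def)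
  finally show ?thesis .
qed

lemma ht_Cons_cons_shift_gt: "r < j \<Longrightarrow> ht (j # cons_shift r u) = Suc (ht (r # u))"
  using ht_Cons_Cons_less[of r j] ht_same_inversions[OF same_inversions_cons_shift]
  by (simp add: cons_shift_def)

lemma EV_same_inversions:
  assumes "same_inversions xs ys"
  shows "EV xs = EV ys"
proof -
  have "height_at xs i = height_at ys i" for i
    unfolding height_at_def by (rule ht_same_inversions[OF same_inversions_drop[OF assms]])
  with assms show ?thesis by (simp add: EV_def same_inversions_def)
qed

lemma Des_same_inversions: "same_inversions xs ys \<Longrightarrow> Des xs = Des ys"
proof -
  assume *: "same_inversions xs ys"
  have "xs ! i < xs ! (i - 1) \<longleftrightarrow> ys ! i < ys ! (i - 1)" if "i \<in> {1..<length xs}" for i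
  proof -
    have "i - 1 < i" "i < length xs" using that by auto
    then show ?thesis using * unfolding same_inversions_def by blast
  qed
  with * show ?thesis by (auto simp: Des_def same_inversions_def)
qed

lemma EV_Cons: "EV (x # ys) = (if even (ht (x # ys)) then {1} else {}) \<union> Suc ` EV ys"
proof (rule set_eqI)
  fix i
  show "i \<in> EV (x # ys) \<longleftrightarrow> i \<in> (if even (ht (x # ys)) then {1} else {}) \<union> Suc ` EV ys"
  proof (cases i)
    case (Suc i')
    then show ?thesis by (cases i') (auto simp: EV_def height_at_def)
  qed (simp add: EV_def)
qed

lemma Des_Cons: "Des (x # ys) = (if ys \<noteq> [] \<and> hd ys < x then {1} else {}) \<union> Suc ` Des ys"
proof (rule set_eqI)
  fix i
  show "i \<in> Des (x # ys) \<longleftrightarrow> i \<in> (if ys \<noteq> [] \<and> hd ys < x then {1} else {}) \<union> Suc ` Des ys"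
  proof (cases i)
    case (Suc i')
    then show ?thesis by (cases i'; cases ys) (auto simp: Des_def nth_Cons')
  qed (simp add: Des_def)
qed

definition weight :: "'a::comm_semiring_1 \<Rightarrow> 'a \<Rightarrow> nat set \<Rightarrow> 'a" where
  "weight s q S = s ^ card S * q ^ \<Sum>S"

lemma weight_Suc_image:
  assumes "finite S"
  shows "weight s q (Suc ` S) = weight (s * q) q S"
proof -
  have "\<Sum>(Suc ` S) = (\<Sum>x\<in>S. x + 1)"
    by (simp add: sum.reindex)
  also have "\<dots> = \<Sum>S + card S"
    by (subst sum.distrib) simp
  finally have "\<Sum>(Suc ` S) = \<Sum>S + card S" .
  then show ?thesis
    by (simp add: weight_def card_image power_add power_mult_distrib ac_simps)
qed

lemma weight_insert:
  assumes "finite S" and "i \<notin> S"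
  shows "weight s q (insert i S) = s * q ^ i * weight s q S"
  using assms by (simp add: weight_def power_add ac_simps)

definition insertion_kernel :: "nat \<Rightarrow> nat \<Rightarrow> nat \<Rightarrow> 'a::comm_semiring_1 \<Rightarrow> 'a" where
  "insertion_kernel m j k t =
     (if 1 \<le> k \<and> k \<le> j then 1 else 0) + (if j < k \<and> k \<le> Suc m then t else 0)"

fun refined_gf :: "nat \<Rightarrow> nat \<Rightarrow> 'a::comm_semiring_1 \<Rightarrow> 'a \<Rightarrow> 'a" where
  "refined_gf 0 k s q = (if k = 1 then 1 else 0)"
| "refined_gf (Suc m) k s q =
     (\<Sum>j\<le>Suc m. insertion_kernel m j k (s * q) * refined_gf m j (s * q) q)"

locale insertion_statistic =
  fixes stat :: "nat list \<Rightarrow> nat set"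
    and state :: "nat list \<Rightarrow> nat"
    and mark :: "nat list \<Rightarrow> nat \<Rightarrow> bool"
  assumes stat_subset: "stat u \<subseteq> {1..length u}"
    and stat_cons_shift: "stat (cons_shift r u) = (if mark u r then {1} else {}) \<union> Suc ` stat u"
    and state_Nil: "state [] = 1"
    and bij_unmarked: "u \<in> perms m \<Longrightarrow>
      bij_betw (\<lambda>r. state (cons_shift r u)) {r \<in> {1..Suc m}. \<not> mark u r} {1..state u}"
    and bij_marked: "u \<in> perms m \<Longrightarrow>
      bij_betw (\<lambda>r. state (cons_shift r u)) {r \<in> {1..Suc m}. mark u r} {state u<..Suc m}"
begin

lemma state_le:
  assumes "u \<in> perms m"
  shows "state u \<le> Suc m"
proof -
  have "state u = card {r \<in> {1..Suc m}. \<not> mark u r}"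
    using bij_betw_same_card[OF bij_unmarked[OF assms]] by simp
  also have "\<dots> \<le> card {1..Suc m}"
    by (rule card_mono) auto
  finally show ?thesis by simp
qed

lemma sum_insertion:
  fixes t :: "'a::comm_semiring_1"
  assumes "u \<in> perms m"
  shows "(\<Sum>r\<in>{1..Suc m}. if state (cons_shift r u) = k then (if mark u r then t else 1) else 0)
       = insertion_kernel m (state u) k t"
proof -
  let ?f = "\<lambda>r. state (cons_shift r u)"
  have split: "{1..Suc m} = {r \<in> {1..Suc m}. \<not> mark u r} \<union> {r \<in> {1..Suc m}. mark u r}" by auto
  have "(\<Sum>r\<in>{1..Suc m}. if ?f r = k then (if mark u r then t else 1) else 0)
      = (\<Sum>r\<in>{r \<in> {1..Suc m}. \<not> mark u r}. if ?f r = k then 1 else 0)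
      + (\<Sum>r\<in>{r \<in> {1..Suc m}. mark u r}. if ?f r = k then t else 0)"
    by (subst split, subst sum.union_disjoint) (auto intro!: arg_cong2[where f="(+)"] sum.cong)
  also have "\<dots> = (\<Sum>i\<in>{1..state u}. if i = k then 1 else 0)
                   + (\<Sum>i\<in>{state u<..Suc m}. if i = k then t else 0)"
    by (intro arg_cong2[where f="(+)"] sum.reindex_bij_betw bij_unmarked bij_marked assms)
  also have "\<dots> = insertion_kernel m (state u) k t"
    by (simp add: insertion_kernel_def)
  finally show ?thesis .
qed

lemma weight_stat_cons_shift:
  "weight s q (stat (cons_shift r u)) = (if mark u r then s * q else 1) * weight (s * q) q (stat u)"
proof -
  have "finite (stat u)" "1 \<notin> Suc ` stat u"
    using stat_subset[of u] by (auto intro: finite_subset)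
  then show ?thesis
    by (simp add: stat_cons_shift weight_insert weight_Suc_image)
qed

lemma sum_weight_state:
  "(\<Sum>u\<in>perms m. if state u = k then weight s q (stat u) else 0) = refined_gf m k s q"
proof (induction m arbitrary: k s)
  case 0
  have "stat [] = {}"
    using stat_subset[of "[]"] by simp
  then show ?case by (simp add: state_Nil weight_def)
next
  case (Suc m)
  have "(\<Sum>w\<in>perms (Suc m). if state w = k then weight s q (stat w) else 0)
      = (\<Sum>u\<in>perms m. weight (s * q) q (stat u) *
           (\<Sum>r\<in>{1..Suc m}. if state (cons_shift r u) = k then (if mark u r then s * q else 1) else 0))"
    unfolding sum_perms_Suc sum_distrib_left
    by (intro sum.cong refl) (simp add: weight_stat_cons_shift ac_simps)
  also have "\<dots> = (\<Sum>u\<in>perms m. insertion_kernel m (state u) k (s * q) * weight (s * q) q (stat u))"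
    by (intro sum.cong refl) (simp only: sum_insertion mult.commute)
  also have "\<dots> = (\<Sum>j\<le>Suc m. \<Sum>u\<in>perms m.
                    if state u = j then insertion_kernel m j k (s * q) * weight (s * q) q (stat u) else 0)"
    by (subst sum.group[symmetric, where g = state and T = "{..Suc m}"])
      (auto simp: state_le sum.inter_filter)
  also have "\<dots> = refined_gf (Suc m) k s q"
    by (simp add: Suc.IH[symmetric] sum_distrib_left if_distrib cong: if_cong)
  finally show ?case .
qed

lemma sum_weight: "(\<Sum>u\<in>perms m. weight s q (stat u)) = (\<Sum>k\<le>Suc m. refined_gf m k s q)"
proof -
  have "(\<Sum>k\<le>Suc m. \<Sum>u\<in>{u. u \<in> perms m \<and> state u = k}. weight s q (stat u))
      = (\<Sum>u\<in>perms m. weight s q (stat u))"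
    by (rule sum.group) (auto simp: state_le)
  then show ?thesis
    by (simp add: sum_weight_state[symmetric] sum.inter_filter[symmetric])
qed

end

definition first_letter :: "nat list \<Rightarrow> nat" where
  "first_letter u = (if u = [] then 1 else hd u)"

lemma first_letter_cons_shift: "first_letter (cons_shift r u) = r"
  by (simp add: first_letter_def cons_shift_def)

lemma first_letter_mem:
  assumes "u \<in> perms m"
  shows "first_letter u \<in> {1..Suc m}"
proof (cases u)
  case (Cons a v)
  then have "a \<in> {1..m}" using permutations_of_setD(1)[OF assms] by auto
  with Cons show ?thesis by (simp add: first_letter_def)
qed (simp add: first_letter_def)

interpretation descents: insertion_statistic Des first_letter "\<lambda>u r. u \<noteq> [] \<and> hd u < r"
proof
  fix u :: "nat list" and r m :: nat
  show "Des u \<subseteq> {1..length u}"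
    by (auto simp: Des_def)
  show "Des (cons_shift r u) = (if u \<noteq> [] \<and> hd u < r then {1} else {}) \<union> Suc ` Des u"
    by (simp add: Des_same_inversions[OF same_inversions_cons_shift] Des_Cons)
  show "first_letter [] = 1"
    by (simp add: first_letter_def)
  assume u: "u \<in> perms m"
  have Nil: "u = [] \<Longrightarrow> m = 0"
    using permutations_of_setD(1)[OF u] by (cases m) auto
  have "{r \<in> {1..Suc m}. \<not> (u \<noteq> [] \<and> hd u < r)} = {1..first_letter u}"
    using first_letter_mem[OF u] Nil by (auto simp: first_letter_def)
  then show "bij_betw (\<lambda>r. first_letter (cons_shift r u))
      {r \<in> {1..Suc m}. \<not> (u \<noteq> [] \<and> hd u < r)} {1..first_letter u}"
    by (simp add: first_letter_cons_shift bij_betw_def)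
  have "{r \<in> {1..Suc m}. u \<noteq> [] \<and> hd u < r} = {first_letter u<..Suc m}"
    using first_letter_mem[OF u] Nil by (auto simp: first_letter_def)
  then show "bij_betw (\<lambda>r. first_letter (cons_shift r u))
      {r \<in> {1..Suc m}. u \<noteq> [] \<and> hd u < r} {first_letter u<..Suc m}"
    by (simp add: first_letter_cons_shift bij_betw_def)
qed

definition odd_slots :: "nat list \<Rightarrow> nat set" where
  "odd_slots u = {j \<in> {1..Suc (length u)}. odd (ht (j # u))}"

lemma finite_odd_slots [simp]: "finite (odd_slots u)"
  by (simp add: odd_slots_def)

lemma odd_slots_cons_shift:
  assumes "r \<in> {1..Suc (length u)}"
  shows "odd_slots (cons_shift r u)
       = {j \<in> odd_slots u. j \<le> r} \<union> (if even (ht (r # u)) then {r<..Suc (Suc (length u))} else {})"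
proof (rule set_eqI)
  fix j
  show "j \<in> odd_slots (cons_shift r u) \<longleftrightarrow>
      j \<in> {j \<in> odd_slots u. j \<le> r} \<union> (if even (ht (r # u)) then {r<..Suc (Suc (length u))} else {})"
  proof (cases "j \<le> r")
    case True
    then show ?thesis
      using assms by (auto simp: odd_slots_def ht_Cons_cons_shift_le)
  next
    case False
    then show ?thesis
      using assms by (auto simp: odd_slots_def ht_Cons_cons_shift_gt)
  qed
qed

lemma bij_betw_rank:
  fixes S :: "nat set"
  assumes "finite S"
  shows "bij_betw (\<lambda>r. card {j \<in> S. j \<le> r}) S {1..card S}"
proof -
  let ?rank = "\<lambda>r. card {j \<in> S. j \<le> r}"
  have rank_less: "?rank x < ?rank y" if "x \<in> S" "y \<in> S" "x < y" for x y
  proof (rule psubset_card_mono)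
    have "y \<in> {j \<in> S. j \<le> y} - {j \<in> S. j \<le> x}"
      using that by simp
    moreover have "{j \<in> S. j \<le> x} \<subseteq> {j \<in> S. j \<le> y}"
      using that by auto
    ultimately show "{j \<in> S. j \<le> x} \<subset> {j \<in> S. j \<le> y}"
      by blast
  qed (use assms in simp)
  have inj: "inj_on ?rank S"
    by (rule linorder_inj_onI'[OF less_imp_neq[OF rank_less]])
  have "?rank x \<in> {1..card S}" if "x \<in> S" for x
  proof -
    have "0 < ?rank x"
      using that assms by (subst card_gt_0_iff) auto
    moreover have "?rank x \<le> card S"
      using assms by (intro card_mono) auto
    ultimately show ?thesis by simp
  qed
  then have "?rank ` S \<subseteq> {1..card S}" by blast
  moreover have "card (?rank ` S) = card {1..card S}"
    by (simp add: card_image[OF inj])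
  ultimately have "?rank ` S = {1..card S}"
    by (intro card_subset_eq) auto
  with inj show ?thesis
    by (simp add: bij_betw_def)
qed

lemma card_odd_slots_cons_shift_odd:
  assumes "r \<in> odd_slots u"
  shows "card (odd_slots (cons_shift r u)) = card {j \<in> odd_slots u. j \<le> r}"
  using assms odd_slots_cons_shift[of r u] by (simp add: odd_slots_def)

lemma card_partition_atLeastAtMost:
  fixes A B :: "nat set"
  assumes "A \<union> B = {1..n}" and "A \<inter> B = {}"
  shows "card A + card B = n"
proof -
  have "finite A" "finite B"
    using assms(1) by (metis finite_Un finite_atLeastAtMost)+
  then show ?thesis
    using card_Un_disjoint[of A B] assms by simp
qed

lemma card_odd_slots_cons_shift_even:
  assumes r: "r \<in> {1..Suc (length u)}" and even: "even (ht (r # u))"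
  shows "card (odd_slots (cons_shift r u))
       = Suc (Suc (length u)) - card {j \<in> {1..Suc (length u)}. even (ht (j # u)) \<and> j \<le> r}"
proof -
  let ?O = "{j \<in> odd_slots u. j \<le> r}"
    and ?E = "{j \<in> {1..Suc (length u)}. even (ht (j # u)) \<and> j \<le> r}"
  have "?O \<union> ?E = {1..r}" and "?O \<inter> ?E = {}"
    using r by (auto simp: odd_slots_def)
  then have partition: "card ?O + card ?E = r"
    by (rule card_partition_atLeastAtMost)
  have "card (odd_slots (cons_shift r u)) = card (?O \<union> {r<..Suc (Suc (length u))})"
    using odd_slots_cons_shift[OF r] even by simp
  also have "\<dots> = card ?O + (Suc (Suc (length u)) - r)"
    by (subst card_Un_disjoint) (auto simp: odd_slots_def)
  finally show ?thesis
    using partition r by simp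
qed

lemma bij_betw_reverse_interval:
  assumes "a + c = n"
  shows "bij_betw (\<lambda>i. Suc n - i) {1..c} {a<..n}"
  by (rule bij_betw_byWitness[where f' = "\<lambda>k. Suc n - k"]) (use assms in auto)

interpretation even_heights:
  insertion_statistic EV "\<lambda>u. card (odd_slots u)" "\<lambda>u r. even (ht (r # u))"
proof
  fix u :: "nat list" and r m :: nat
  show "EV u \<subseteq> {1..length u}"
    by (auto simp: EV_def)
  show "EV (cons_shift r u) = (if even (ht (r # u)) then {1} else {}) \<union> Suc ` EV u"
    by (simp add: EV_same_inversions[OF same_inversions_cons_shift] EV_Cons)
  show "card (odd_slots []) = 1"
    by (simp add: odd_slots_def ht.simps)
  assume "u \<in> perms m"
  then have len: "length u = m"
    by (simp add: length_finite_permutations_of_set)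
  let ?O = "odd_slots u" and ?E = "{r \<in> {1..Suc m}. even (ht (r # u))}"
  have O: "{r \<in> {1..Suc m}. \<not> even (ht (r # u))} = ?O"
    using len by (auto simp: odd_slots_def)
  have sizes: "card ?O + card ?E = Suc m"
    by (rule card_partition_atLeastAtMost) (use len in \<open>auto simp: odd_slots_def\<close>)
  show "bij_betw (\<lambda>r. card (odd_slots (cons_shift r u)))
      {r \<in> {1..Suc m}. \<not> even (ht (r # u))} {1..card ?O}"
    unfolding O
    by (rule bij_betw_cong[THEN iffD1, OF _ bij_betw_rank])
      (simp_all add: card_odd_slots_cons_shift_odd)
  have "bij_betw (\<lambda>r. Suc (Suc m) - card {j \<in> ?E. j \<le> r}) ?E {card ?O<..Suc m}"
    by (rule bij_betw_trans[OF bij_betw_rank bij_betw_reverse_interval, unfolded comp_def])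
      (use sizes in auto)
  then show "bij_betw (\<lambda>r. card (odd_slots (cons_shift r u))) ?E {card ?O<..Suc m}"
    by (rule bij_betw_cong[THEN iffD2, rotated])
      (auto simp: card_odd_slots_cons_shift_even len)
qed

theorem corollary8p2:
  fixes n :: nat and s q :: "'a :: comm_ring_1"
  shows "(\<Sum>w\<in>permutations_of_set {1..n}. s ^ veh' w * q ^ SIVEH w)
       = (\<Sum>w\<in>permutations_of_set {1..n}. s ^ des w * q ^ MAJ w)"
proof -
  have "(\<Sum>w\<in>perms n. s ^ veh' w * q ^ SIVEH w) = (\<Sum>w\<in>perms n. weight s q (EV w))"
    by (simp add: weight_def veh'_def SIVEH_def)
  also have "\<dots> = (\<Sum>k\<le>Suc n. refined_gf n k s q)"
    by (rule even_heights.sum_weight)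
  also have "\<dots> = (\<Sum>w\<in>perms n. weight s q (Des w))"
    by (rule descents.sum_weight[symmetric])
  also have "\<dots> = (\<Sum>w\<in>perms n. s ^ des w * q ^ MAJ w)"
    by (simp add: weight_def des_def MAJ_def)
  finally show ?thesis .
qed

end
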